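(* Let $n\ge3$ be odd. Then $\lambda$ is an eigenvalue of $C_n$ if and only if $-\lambda$ is an eigenvalue of $C_n^{=}$.
   Context: A mixed graph is obtained from a finite simple graph by orienting some of its edges. With $\omega=\frac{1+\mathbf{i}\sqrt3}{2}$, the matrix $N$ has $(u,v)$-entry $\omega$ if $\overrightarrow{uv}$ is an arc, $\bar\omega$ if $\overrightarrow{vu}$ is an arc, $1$ for an undirected edge, $0$ otherwise; eigenvalues of a mixed graph are those of $N$. $C_n$ is the undirected $n$-cycle (whose $N$ is its ordinary adjacency matrix). $C_n^{=}$ is the mixed cycle $v_1v_2\cdots v_nv_1$ with arcs $\overrightarrow{v_1v_2},\overrightarrow{v_2v_3},\overrightarrow{v_3v_4}$ (indices mod $n$) and all other edges undirected. *)

theory Defs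
  imports "Jordan_Normal_Form.Char_Poly"
begin

text \<open>omega = (1 + i sqrt 3)/2. Vertices v_1..v_n are represented by indices 0..n-1.\<close>
definition omega :: complex where
  "omega = (1 + \<i> * complex_of_real (sqrt 3)) / 2"

definition mixed_mat :: "nat \<Rightarrow> (nat \<Rightarrow> nat \<Rightarrow> bool) \<Rightarrow> (nat \<Rightarrow> nat \<Rightarrow> bool) \<Rightarrow> complex mat" where
  "mixed_mat n edge arc = mat n n (\<lambda>(u, v).
      if arc u v then omega
      else if arc v u then cnj omega
      else if edge u v then 1 else 0)"

definition cyc_edge :: "nat \<Rightarrow> nat \<Rightarrow> nat \<Rightarrow> bool" where
  "cyc_edge n u v = (u < n \<and> v < n \<and> (v = (u + 1) mod n \<or> u = (v + 1) mod n))"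

definition C_mat :: "nat \<Rightarrow> complex mat" where
  "C_mat n = mixed_mat n (cyc_edge n) (\<lambda>_ _. False)"

text \<open>C_n^=: arcs v_1->v_2, v_2->v_3, v_3->v_4 (indices mod n), i.e. arcs i -> (i+1) mod n
  for i in {0,1,2}; all other cycle edges undirected.\<close>
definition Ceq_arc :: "nat \<Rightarrow> nat \<Rightarrow> nat \<Rightarrow> bool" where
  "Ceq_arc n u v = (u < n \<and> u \<le> 2 \<and> v = (u + 1) mod n)"

definition Ceq_mat :: "nat \<Rightarrow> complex mat" where
  "Ceq_mat n = mixed_mat n (cyc_edge n) (Ceq_arc n)"

end

theory Submission
  imports Defs
begin

text \<open>Walking once around a mixed cycle, the product of the entries of N is its gain. For
  \<open>C\<^sub>n\<^sup>=\<close> the gain is \<open>\<omega>\<^sup>3 = -1\<close>, and for \<open>-C\<^sub>n\<close> with n odd it is \<open>(-1)\<^sup>n = -1\<close>. Cycles with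
  equal gain are related by a diagonal unimodular similarity D (a switching), so
  \<open>N(C\<^sub>n\<^sup>=) = - D N(C\<^sub>n) D\<^sup>-\<^sup>1\<close>, and the two spectra are negatives of each other.\<close>

lemma eigenvalue_if_diagonally_similar:
  fixes A B :: "'a::field mat"
  assumes A: "A \<in> carrier_mat n n" and B: "B \<in> carrier_mat n n"
    and d_nonzero: "\<And>i. i < n \<Longrightarrow> d i \<noteq> 0"
    and AB: "\<And>i j. i < n \<Longrightarrow> j < n \<Longrightarrow> A $$ (i, j) * d j = c * (d i * B $$ (i, j))"
    and "eigenvalue B k"
  shows "eigenvalue A (c * k)"
proof -
  obtain v where v: "v \<in> carrier_vec n" "v \<noteq> 0\<^sub>v n" "B *\<^sub>v v = k \<cdot>\<^sub>v v"
    using \<open>eigenvalue B k\<close> B unfolding eigenvalue_def eigenvector_def by auto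
  define w where "w = vec n (\<lambda>i. d i * v $ i)"
  have w: "w \<in> carrier_vec n" unfolding w_def by simp
  have "(A *\<^sub>v w) $ i = c * k * w $ i" if i: "i < n" for i
  proof -
    have "(A *\<^sub>v w) $ i = (\<Sum>j = 0..<n. A $$ (i, j) * d j * v $ j)"
      using A i by (simp add: scalar_prod_def w_def mult.assoc)
    also have "\<dots> = c * d i * (\<Sum>j = 0..<n. B $$ (i, j) * v $ j)"
      by (simp add: AB i sum_distrib_left mult.assoc mult.left_commute)
    also have "(\<Sum>j = 0..<n. B $$ (i, j) * v $ j) = (B *\<^sub>v v) $ i"
      using B v(1) i by (simp add: scalar_prod_def)
    finally show ?thesis
      using v i by (simp add: w_def)
  qed
  then have "A *\<^sub>v w = (c * k) \<cdot>\<^sub>v w"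
    using A w by (intro eq_vecI) auto
  moreover have "w \<noteq> 0\<^sub>v n"
  proof
    assume "w = 0\<^sub>v n"
    then have "v $ i = 0" if "i < n" for i
      using d_nonzero[OF that] that by (metis index_vec index_zero_vec(1) mult_eq_0_iff w_def)
    then have "v = 0\<^sub>v n"
      using v(1) by (intro eq_vecI) auto
    with v(2) show False ..
  qed
  ultimately show ?thesis
    using A w unfolding eigenvalue_def eigenvector_def by auto
qed

lemma eigenvalue_diagonally_similar_iff:
  fixes A B :: "'a::field mat"
  assumes A: "A \<in> carrier_mat n n" and B: "B \<in> carrier_mat n n"
    and d_nonzero: "\<And>i. i < n \<Longrightarrow> d i \<noteq> 0" and "c \<noteq> 0"
    and AB: "\<And>i j. i < n \<Longrightarrow> j < n \<Longrightarrow> A $$ (i, j) * d j = c * (d i * B $$ (i, j))"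
  shows "eigenvalue A (c * k) \<longleftrightarrow> eigenvalue B k"
proof
  have BA: "B $$ (i, j) * inverse (d j) = inverse c * (inverse (d i) * A $$ (i, j))"
    if "i < n" "j < n" for i j
    using AB[OF that] d_nonzero that \<open>c \<noteq> 0\<close> by (simp add: field_simps)
  assume "eigenvalue A (c * k)"
  from eigenvalue_if_diagonally_similar[OF B A _ BA this] d_nonzero \<open>c \<noteq> 0\<close>
  show "eigenvalue B k" by (simp add: mult.assoc[symmetric])
qed (rule eigenvalue_if_diagonally_similar[OF A B d_nonzero AB])

lemma omega_mult_cnj_omega: "cnj omega * omega = 1"
  by (simp add: omega_def complex_eq_iff)

lemma mod_add_two_neq:
  fixes i n :: nat
  assumes "n \<ge> 3" "i < n"
  shows "(i + 2) mod n \<noteq> i"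
proof (cases "i + 2 < n")
  case False
  then have "(i + 2) mod n = i + 2 - n"
    using assms by (simp add: le_mod_geq)
  moreover have "i + 2 - n < i"
    using False assms by linarith
  ultimately show ?thesis by simp
qed simp

lemma C_mat_entry:
  "i < n \<Longrightarrow> j < n \<Longrightarrow> C_mat n $$ (i, j) = (if cyc_edge n i j then 1 else 0)"
  by (simp add: C_mat_def mixed_mat_def)

lemma Ceq_mat_forward:
  assumes "n \<ge> 3" "i < n"
  shows "Ceq_mat n $$ (i, (i + 1) mod n) = (if i \<le> 2 then omega else 1)"
  using assms mod_add_two_neq[OF assms]
  by (simp add: Ceq_mat_def mixed_mat_def Ceq_arc_def cyc_edge_def mod_Suc_eq)

lemma Ceq_mat_backward:
  assumes "n \<ge> 3" "i < n"
  shows "Ceq_mat n $$ ((i + 1) mod n, i) = (if i \<le> 2 then cnj omega else 1)"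
  using assms mod_add_two_neq[OF assms]
  by (simp add: Ceq_mat_def mixed_mat_def Ceq_arc_def cyc_edge_def mod_Suc_eq)

lemma Ceq_mat_nonadjacent:
  "i < n \<Longrightarrow> j < n \<Longrightarrow> \<not> cyc_edge n i j \<Longrightarrow> Ceq_mat n $$ (i, j) = 0"
  by (simp add: Ceq_mat_def mixed_mat_def Ceq_arc_def cyc_edge_def)

definition switching :: "nat \<Rightarrow> complex" where
  "switching i = (if i = 0 then 1 else if i = 1 then omega - 1 else if i = 2 then - omega
     else (-1) ^ (i + 1))"

lemma switching_nonzero: "switching i \<noteq> 0"
  by (simp add: switching_def omega_def complex_eq_iff)

lemma switching_forward:
  assumes "n \<ge> 3" "odd n" "i < n"
  shows "(if i \<le> 2 then omega else 1) * switching ((i + 1) mod n) = - switching i"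
proof (cases "i + 1 < n")
  case True
  then have "i = 0 \<or> i = 1 \<or> i = 2 \<or> i \<ge> 3" by auto
  with True show ?thesis
    by (auto simp: switching_def omega_def complex_eq_iff field_simps)
next
  case False
  then have "i = n - 1" using assms by simp
  with assms show ?thesis
    by (auto simp: switching_def omega_def complex_eq_iff)
qed

lemma switching_backward:
  assumes "n \<ge> 3" "odd n" "i < n"
  shows "(if i \<le> 2 then cnj omega else 1) * switching i = - switching ((i + 1) mod n)"
proof -
  define w where "w = (if i \<le> 2 then omega else 1)"
  have "w * switching ((i + 1) mod n) = - switching i"
    unfolding w_def by (rule switching_forward[OF assms])
  then have "switching i = - (w * switching ((i + 1) mod n))"
    by simp
  then have "cnj w * switching i = - (cnj w * w) * switching ((i + 1) mod n)"
    by (simp add: algebra_simps)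
  also have "cnj w * w = 1"
    by (simp add: w_def omega_mult_cnj_omega)
  finally show ?thesis
    by (simp add: w_def split: if_splits)
qed

lemma Ceq_mat_switching_C_mat:
  assumes "n \<ge> 3" "odd n" "i < n" "j < n"
  shows "Ceq_mat n $$ (i, j) * switching j = - (switching i * C_mat n $$ (i, j))"
proof -
  consider "j = (i + 1) mod n" | "i = (j + 1) mod n" | "\<not> cyc_edge n i j"
    unfolding cyc_edge_def by blast
  then show ?thesis
  proof cases
    case 1
    with assms show ?thesis
      using Ceq_mat_forward switching_forward C_mat_entry by (simp add: cyc_edge_def)
  next
    case 2
    with assms show ?thesis
      using Ceq_mat_backward switching_backward C_mat_entry by (simp add: cyc_edge_def)
  qed (use assms C_mat_entry Ceq_mat_nonadjacent in simp)
qed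

theorem lemma6p9:
  fixes n :: nat and lam :: complex
  assumes "n \<ge> 3" and "odd n"
  shows "eigenvalue (C_mat n) lam \<longleftrightarrow> eigenvalue (Ceq_mat n) (- lam)"
proof -
  have "Ceq_mat n \<in> carrier_mat n n" "C_mat n \<in> carrier_mat n n"
    by (simp_all add: Ceq_mat_def C_mat_def mixed_mat_def)
  then have "eigenvalue (Ceq_mat n) ((-1) * lam) \<longleftrightarrow> eigenvalue (C_mat n) lam"
    by (rule eigenvalue_diagonally_similar_iff[where d = switching])
      (simp_all add: switching_nonzero Ceq_mat_switching_C_mat[OF assms])
  then show ?thesis by simp
qed

end
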